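(* Let $n,d$ be positive integers. For all ${X},{Y}\in \mathbb{R}^{d\times n}$ we have $$d_{\mathcal{D}}({X},{Y})\leq 2n^{3/2}\, d_{\mathcal{G}_{\pm}}({X},{Y}).$$ Moreover, for all ${X},{Y}\in\mathbb{R}^{d\times n}$ satisfying $\|{X}\|_{1,2}\leq 1$ and $\|{Y}\|_{1,2}\leq 1$, we have $$\frac{1}{4n+2}\, d_{\mathcal{G}_{\pm}}^2({X},{Y}) \leq d_{\mathcal{D}}({X},{Y}).$$
   Context: A point set is a matrix ${X}\in\mathbb{R}^{d\times n}$ with columns $x_1,\dots,x_n\in\mathbb{R}^d$. The group $\mathcal{G}_{\pm}=O(d)\rtimes\mathbb{R}^d\times S_n$ acts on point sets by permuting the columns, applying a common orthogonal matrix to all columns, and adding a common translation vector to all columns. The Procrustes Matching metric is $$d_{\mathcal{G}_{\pm}}({X},{Y})=\Big[\min_{(\pi,R,t)\in S_n\times O(d)\times\mathbb{R}^d}\sum_{j=1}^n\|x_j-Ry_{\pi(j)}+t\|_2^2\Big]^{1/2}=\min_{g\in\mathcal{G}_{\pm}}\|{X}-g{Y}\|_F.$$ The Hard-Gromov-Wasserstein distance is $$d_{\mathcal{D}}({X},{Y})=\min_{\pi\in S_n}\sum_{i,j=1}^n\big|\,\|x_i-x_j\|_2-\|y_{\pi(i)}-y_{\pi(j)}\|_2\,\big|.$$ $\|{X}\|_{1,2}=\max_{1\le i\le n}\|x_i\|_2$. *)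

theory Defs
  imports "HOL-Analysis.Analysis" "HOL-Combinatorics.Permutations"
begin

text \<open>A point set X in R^{d x n}: columns indexed by the finite type 'n,
  each column a vector in R^d = real^'d.\<close>

definition procrustes_dist :: "('n::finite \<Rightarrow> real^'d) \<Rightarrow> ('n \<Rightarrow> real^'d) \<Rightarrow> real" where
  "procrustes_dist X Y =
     sqrt (Inf {(\<Sum>j\<in>UNIV. (norm (X j - R *v Y (\<pi> j) + t))\<^sup>2) | \<pi> R t.
                 \<pi> permutes (UNIV::'n set) \<and> orthogonal_matrix (R :: real^'d^'d)})"

definition hard_gw_dist :: "('n::finite \<Rightarrow> real^'d) \<Rightarrow> ('n \<Rightarrow> real^'d) \<Rightarrow> real" where
  "hard_gw_dist X Y =
     Min {(\<Sum>i\<in>UNIV. \<Sum>j\<in>UNIV. \<bar>norm (X i - X j) - norm (Y (\<pi> i) - Y (\<pi> j))\<bar>) | \<pi>.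
                 \<pi> permutes (UNIV::'n set)}"

definition norm_1_2 :: "('n::finite \<Rightarrow> real^'d) \<Rightarrow> real" where
  "norm_1_2 X = Max (range (\<lambda>i. norm (X i)))"

end

theory Submission
  imports Defs
begin

text \<open>
  Upper bound: for any alignment (pi, R, t) with residuals e_i = |x_i - R y_(pi i) + t|,
  the triangle inequality gives | |x_i - x_j| - |y_(pi i) - y_(pi j)| | <= e_i + e_j;
  summing over all pairs and applying Cauchy-Schwarz bounds the Gromov-Wasserstein sum
  by 2 n^(3/2) (sum_i e_i^2)^(1/2).

  Lower bound: fix an optimal matching and centre both point sets, giving d x n
  matrices X and Z. An orthogonal R maximising tr (R Z X^T) makes X (R Z)^T symmetric
  positive semidefinite, as one sees by comparing R with its products with Householder
  reflections. For such a pair X, Y the squared Frobenius distance is at most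
  2 sum_j |(X^T X - Y^T Y) e_j|. Centred Gram matrices are double centrings of squared
  distance matrices, and the column norms of a double centring sum to at most the
  entrywise l1 norm of the matrix. Hence the alignment cost is at most
  2 sum_ij | |x_i - x_j|^2 - |y_i - y_j|^2 |, which is at most 8 d_D for points in the
  unit ball; and 8 <= 4n + 2 once n >= 2, while d_D = 0 for n = 1.
\<close>


lemma matrix_diff_rdistrib: "((A::'a::ring_1^'m^'n) - B) ** C = A ** C - B ** C"
  by (simp add: vec_eq_iff matrix_matrix_mult_def sum_subtractf algebra_simps)

lemma matrix_diff_ldistrib: "(A::'a::ring_1^'m^'n) ** (B - C) = A ** B - A ** C"
  by (simp add: vec_eq_iff matrix_matrix_mult_def sum_subtractf algebra_simps)

lemma transpose_add: "transpose (A + B) = transpose A + transpose B"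
  by (simp add: vec_eq_iff transpose_def)

lemma transpose_diff: "transpose (A - B) = transpose A - transpose B"
  by (simp add: vec_eq_iff transpose_def)

lemma matrix_add_rdistrib: "((A::'a::semiring_1^'m^'n) + B) ** C = A ** C + B ** C"
  by (simp add: vec_eq_iff matrix_matrix_mult_def sum.distrib algebra_simps)

lemma mat_mult_vector: "mat c *v (v::real^'n) = c *\<^sub>R v"
  by (simp add: vec_eq_iff matrix_vector_mult_def mat_def if_distrib if_distribR cong del: if_weak_cong)

lemma matrix_mul_mat_right: "(A::real^'m^'n) ** mat c = c *\<^sub>R A"
  by (simp add: vec_eq_iff matrix_matrix_mult_def mat_def if_distrib cong: if_cong)

lemma trace_scaleR: "trace ((c::real) *\<^sub>R A) = c * trace A"
  by (simp add: trace_def sum_distrib_left)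

lemma column_diff: "column j (A - B) = column j A - column j B"
  by (simp add: column_def vec_eq_iff)

lemma column_scaleR: "column j (c *\<^sub>R A) = c *\<^sub>R column j A"
  by (simp add: column_def vec_eq_iff)

lemma column_matrix_mult: "column j ((A::'a::semiring_1^'m^'n) ** B) = A *v column j B"
  by (simp add: column_def matrix_matrix_mult_def matrix_vector_mult_def vec_eq_iff)

lemma trace_transpose_mult:
  "trace (transpose (A::real^'n^'d) ** B) = (\<Sum>j\<in>UNIV. column j A \<bullet> column j B)"
  by (simp add: trace_def matrix_matrix_mult_def transpose_def column_def inner_vec_def)

lemma inner_mult_transpose_vector:
  "v \<bullet> ((A ** transpose (B::real^'n^'d)) *v v) = (transpose A *v v) \<bullet> (transpose B *v v)"
  by (simp flip: matrix_vector_mul_assoc add: dot_lmul_matrix)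

lemma orthogonal_matrix_inner:
  assumes "orthogonal_matrix (R::real^'n^'n)"
  shows "(R *v u) \<bullet> (R *v w) = u \<bullet> w"
proof -
  have "(R *v u) \<bullet> (R *v w) = ((transpose R ** R) *v u) \<bullet> w"
    by (simp flip: matrix_vector_mul_assoc add: dot_lmul_matrix)
  then show ?thesis
    using assms by (simp add: orthogonal_matrix)
qed

lemma orthogonal_matrix_norm:
  "orthogonal_matrix (R::real^'n^'n) \<Longrightarrow> norm (R *v u) = norm u"
  by (simp add: norm_eq_sqrt_inner orthogonal_matrix_inner)


section \<open>Householder reflections\<close>

definition outer_product :: "real^'m \<Rightarrow> real^'n \<Rightarrow> real^'n^'m" where
  "outer_product u v = (\<chi> i j. u $ i * v $ j)"

lemma outer_product_mult_vector: "outer_product u v *v w = (v \<bullet> w) *\<^sub>R u"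
  by (simp add: vec_eq_iff matrix_vector_mult_def outer_product_def inner_vec_def
      sum_distrib_left mult_ac)

lemma trace_outer_product_mult: "trace (outer_product u v ** Z) = v \<bullet> (Z *v u)"
proof -
  have "trace (outer_product u v ** Z) = (\<Sum>i\<in>UNIV. \<Sum>k\<in>UNIV. u $ i * v $ k * Z $ k $ i)"
    by (simp add: trace_def matrix_matrix_mult_def outer_product_def)
  also have "\<dots> = (\<Sum>k\<in>UNIV. \<Sum>i\<in>UNIV. u $ i * v $ k * Z $ k $ i)"
    by (rule sum.swap)
  finally show ?thesis
    by (simp add: inner_vec_def matrix_vector_mult_def sum_distrib_left mult_ac)
qed

definition householder :: "real^'n \<Rightarrow> real^'n^'n" where
  "householder u = mat 1 - (2 / (u \<bullet> u)) *\<^sub>R outer_product u u"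

lemma householder_mult_vector: "householder u *v w = w - (2 / (u \<bullet> u) * (u \<bullet> w)) *\<^sub>R u"
  by (simp add: householder_def matrix_vector_mult_diff_rdistrib outer_product_mult_vector
      flip: scaleR_matrix_vector_assoc)

lemma trace_householder_mult:
  "trace (householder u ** Z) = trace Z - 2 / (u \<bullet> u) * (u \<bullet> (Z *v u))"
  by (simp add: householder_def matrix_diff_rdistrib trace_sub trace_scaleR trace_outer_product_mult
      flip: scalar_matrix_assoc)

lemma orthogonal_matrix_householder:
  assumes "u \<noteq> 0"
  shows "orthogonal_matrix (householder u)"
proof -
  have "transpose (householder u) = householder u"
    by (simp add: householder_def vec_eq_iff transpose_def outer_product_def mat_def mult.commute)
  moreover have "(householder u ** householder u) *v w = w" for w
  proof -
    define a where "a = 2 / (u \<bullet> u) * (u \<bullet> w)"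
    have "u \<bullet> (w - a *\<^sub>R u) = - (u \<bullet> w)"
      using assms by (simp add: a_def inner_diff_right)
    then have "householder u *v (w - a *\<^sub>R u) = w - a *\<^sub>R u + a *\<^sub>R u"
      by (simp add: householder_mult_vector a_def)
    then show ?thesis
      by (simp flip: matrix_vector_mul_assoc add: householder_mult_vector a_def)
  qed
  ultimately show ?thesis
    unfolding orthogonal_matrix by (metis matrix_eq matrix_vector_mul_lid)
qed


section \<open>Orthogonal matrices maximising a trace\<close>

lemma compact_orthogonal_matrices: "compact {A::real^'n^'n. orthogonal_matrix A}"
proof -
  have "closed {A::real^'n^'n. transpose A ** A = mat 1}"
    by (intro closed_Collect_eq continuous_on_vec_lambda)
       (auto simp: transpose_def matrix_matrix_mult_def intro!: continuous_intros continuous_on_vec_lambda)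
  moreover have "norm A \<le> real CARD('n)" if "orthogonal_matrix A" for A :: "real^'n^'n"
  proof -
    have rows: "norm (A $ i) = 1" for i
      using that unfolding orthogonal_matrix_orthonormal_rows by (metis row_def vec_nth_inverse)
    have "norm A \<le> (\<Sum>i\<in>UNIV. norm (A $ i))"
      unfolding norm_vec_def by (rule L2_set_le_sum) simp
    then show ?thesis
      by (simp add: rows)
  qed
  then have "bounded {A::real^'n^'n. orthogonal_matrix A}"
    unfolding bounded_iff by blast
  ultimately show ?thesis
    by (simp add: compact_eq_bounded_closed orthogonal_matrix)
qed

lemma exists_orthogonal_maximizing_trace:
  fixes N :: "real^'n^'n"
  obtains R where "orthogonal_matrix R"
    and "\<And>G. orthogonal_matrix G \<Longrightarrow> trace (G ** (R ** N)) \<le> trace (R ** N)"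
proof -
  have "continuous_on {A. orthogonal_matrix A} (\<lambda>A. trace (A ** N))"
    unfolding trace_def matrix_matrix_mult_def by (auto intro!: continuous_intros)
  moreover have "{A::real^'n^'n. orthogonal_matrix A} \<noteq> {}"
    using orthogonal_matrix_id by blast
  ultimately obtain R where "orthogonal_matrix R"
    and "\<And>A. orthogonal_matrix A \<Longrightarrow> trace (A ** N) \<le> trace (R ** N)"
    using continuous_attains_sup[OF compact_orthogonal_matrices] by blast
  then show thesis
    by (metis that matrix_mul_assoc orthogonal_matrix_mul)
qed

lemma linear_le_quadratic_imp_zero:
  fixes a b :: real
  assumes "\<And>t. b * t \<le> a * t\<^sup>2"
  shows "b = 0"
proof (rule ccontr)
  assume "b \<noteq> 0"
  define s where "s = 1 / (\<bar>a\<bar> + 1)"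
  have "s > 0" "a * s < 1"
    by (auto simp: s_def field_simps abs_if)
  have "b\<^sup>2 * s \<le> a * (s * b)\<^sup>2"
    using assms[of "s * b"] by (simp add: power2_eq_square mult_ac)
  then have "b\<^sup>2 * s * (1 - a * s) \<le> 0"
    by (simp add: power2_eq_square algebra_simps)
  moreover have "b\<^sup>2 * s * (1 - a * s) > 0"
    using \<open>b \<noteq> 0\<close> \<open>s > 0\<close> \<open>a * s < 1\<close> by simp
  ultimately show False
    by linarith
qed

lemma trace_maximal_imp_psd:
  assumes "\<And>G. orthogonal_matrix G \<Longrightarrow> trace (G ** K) \<le> trace (K::real^'n^'n)"
  shows "0 \<le> v \<bullet> (K *v v)"
proof (cases "v = 0")
  case False
  then have "0 < 2 / (v \<bullet> v)"
    by simp
  moreover have "0 \<le> 2 / (v \<bullet> v) * (v \<bullet> (K *v v))"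
    using assms[OF orthogonal_matrix_householder[OF False]] by (simp add: trace_householder_mult)
  ultimately show ?thesis
    by (meson zero_le_mult_iff not_le)
qed simp

lemma trace_householder_pair_mult:
  assumes "b \<bullet> b = 1" "w \<bullet> w = 1" "b \<bullet> w = 0"
  shows "trace (householder (b + t *\<^sub>R w) ** householder b ** K) = trace K -
    2 / (1 + t\<^sup>2) * (t * (w \<bullet> (K *v b) - b \<bullet> (K *v w)) + t\<^sup>2 * (b \<bullet> (K *v b) + w \<bullet> (K *v w)))"
proof -
  let ?a = "b + t *\<^sub>R w"
  have aa: "?a \<bullet> ?a = 1 + t\<^sup>2" and ab: "?a \<bullet> b = 1"
    using assms by (simp_all add: inner_add_left inner_add_right inner_commute power2_eq_square)
  have "trace (householder ?a ** householder b ** K) =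
      trace K - 2 * (b \<bullet> (K *v b)) - 2 / (1 + t\<^sup>2) * (?a \<bullet> (K *v ?a) - 2 * (b \<bullet> (K *v ?a)))"
    using assms aa ab
    by (simp add: trace_householder_mult householder_mult_vector inner_diff_right
        flip: matrix_mul_assoc matrix_vector_mul_assoc)
  also have "\<dots> = trace K -
    2 / (1 + t\<^sup>2) * (t * (w \<bullet> (K *v b) - b \<bullet> (K *v w)) + t\<^sup>2 * (b \<bullet> (K *v b) + w \<bullet> (K *v w)))"
    using add_pos_nonneg[OF zero_less_one zero_le_square[of t]]
    by (simp add: matrix_vector_right_distrib matrix_vector_mult_scaleR inner_add_left inner_add_right
        field_simps power2_eq_square)
  finally show ?thesis .
qed

lemma trace_maximal_imp_symmetric_form:
  assumes max: "\<And>G. orthogonal_matrix G \<Longrightarrow> trace (G ** K) \<le> trace (K::real^'n^'n)"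
    and b: "b \<bullet> b = 1" and w: "w \<bullet> w = 1" and bw: "b \<bullet> w = 0"
  shows "b \<bullet> (K *v w) = w \<bullet> (K *v b)"
proof -
  \<comment> \<open>\<open>householder (b + t *\<^sub>R w) ** householder b\<close> rotates the plane of \<open>b\<close> and \<open>w\<close> by \<open>2 arctan t\<close>;
    maximality against these small rotations kills the antisymmetric part of \<open>K\<close> on that plane.\<close>
  have "(b \<bullet> (K *v w) - w \<bullet> (K *v b)) * t \<le> (b \<bullet> (K *v b) + w \<bullet> (K *v w)) * t\<^sup>2" for t
  proof -
    have "(b + t *\<^sub>R w) \<bullet> (b + t *\<^sub>R w) = 1 + t\<^sup>2"
      using b w bw by (simp add: inner_add_left inner_add_right inner_commute power2_eq_square)
    then have "b + t *\<^sub>R w \<noteq> 0"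
      by (metis add_pos_nonneg inner_zero_left less_numeral_extra(3) zero_le_power2 zero_less_one)
    moreover have "b \<noteq> 0"
      using b by auto
    ultimately have "orthogonal_matrix (householder (b + t *\<^sub>R w) ** householder b)"
      by (simp add: orthogonal_matrix_householder orthogonal_matrix_mul)
    then have "0 \<le> 2 / (1 + t\<^sup>2) *
        (t * (w \<bullet> (K *v b) - b \<bullet> (K *v w)) + t\<^sup>2 * (b \<bullet> (K *v b) + w \<bullet> (K *v w)))"
      using max trace_householder_pair_mult[OF b w bw, of t K] by fastforce
    moreover have "0 < 2 / (1 + t\<^sup>2)"
      by (simp add: add_pos_nonneg)
    ultimately have "0 \<le> t * (w \<bullet> (K *v b) - b \<bullet> (K *v w)) + t\<^sup>2 * (b \<bullet> (K *v b) + w \<bullet> (K *v w))"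
      by (meson zero_le_mult_iff not_le)
    then show ?thesis
      by (simp add: algebra_simps)
  qed
  then show ?thesis
    using linear_le_quadratic_imp_zero by fastforce
qed

lemma trace_maximal_imp_symmetric:
  assumes "\<And>G. orthogonal_matrix G \<Longrightarrow> trace (G ** K) \<le> trace (K::real^'n^'n)"
  shows "transpose K = K"
proof -
  have "K $ i $ j = K $ j $ i" if "i \<noteq> j" for i j
  proof -
    have "axis i 1 \<bullet> (K *v axis j 1) = axis j 1 \<bullet> (K *v axis i (1::real))"
      by (rule trace_maximal_imp_symmetric_form[OF assms]) (use that in \<open>simp_all add: inner_axis_axis\<close>)
    then show ?thesis
      by (simp only: matrix_vector_mult_basis inner_axis') (simp add: column_def)
  qed
  then show ?thesis
    unfolding vec_eq_iff transpose_def by (metis vec_lambda_beta)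
qed


section \<open>Frobenius distance and Gram matrices\<close>

lemma mult_transpose_add_diff:
  fixes X Y :: "real^'n^'d"
  assumes "transpose (X ** transpose Y) = X ** transpose Y"
  shows "(X + Y) ** transpose (X - Y) = X ** transpose X - Y ** transpose Y"
  using assms by (simp add: transpose_diff matrix_diff_ldistrib matrix_add_rdistrib matrix_transpose_mul)

lemma scaleR_two_gram_diff:
  fixes X Y :: "real^'n^'d"
  shows "2 *\<^sub>R (transpose X ** X - transpose Y ** Y) =
    transpose (X - Y) ** (X + Y) + transpose (X + Y) ** (X - Y)"
  unfolding transpose_diff transpose_add matrix_diff_rdistrib matrix_add_rdistrib
    matrix_diff_ldistrib matrix_add_ldistrib
  by (simp add: scaleR_2)

lemma norm_transpose_diff_le_norm_transpose_add:
  fixes X Y :: "real^'n^'d"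
  assumes "0 \<le> v \<bullet> ((X ** transpose Y) *v v)"
  shows "norm (transpose (X - Y) *v v) \<le> norm (transpose (X + Y) *v v)"
proof (rule power2_le_imp_le)
  let ?x = "transpose X *v v" and ?y = "transpose Y *v v"
  have "0 \<le> ?x \<bullet> ?y"
    using assms by (simp only: inner_mult_transpose_vector)
  then have "(norm (?x - ?y))\<^sup>2 \<le> (norm (?x + ?y))\<^sup>2"
    by (simp add: power2_norm_eq_inner inner_add_left inner_add_right inner_diff_left
        inner_diff_right inner_commute)
  then show "(norm (transpose (X - Y) *v v))\<^sup>2 \<le> (norm (transpose (X + Y) *v v))\<^sup>2"
    by (simp only: transpose_diff transpose_add matrix_vector_mult_diff_rdistrib
        matrix_vector_mult_add_rdistrib)
qed simp

lemma inner_regularized_gram: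
  "v \<bullet> ((F ** transpose F + mat \<epsilon>) *v v) = (norm (transpose F *v v))\<^sup>2 + \<epsilon> * (v \<bullet> v)"
  by (simp only: matrix_vector_mult_add_rdistrib inner_add_right inner_mult_transpose_vector
      mat_mult_vector inner_scaleR_right power2_norm_eq_inner)

lemma regularized_gram_inverse:
  fixes F :: "real^'n^'d"
  assumes "\<epsilon> > 0"
  obtains A where "A ** (F ** transpose F + mat \<epsilon>) = mat 1"
    and "(F ** transpose F + mat \<epsilon>) ** A = mat 1"
    and "transpose A = A" and "\<And>v. 0 \<le> v \<bullet> (A *v v)"
proof -
  let ?L = "F ** transpose F + mat \<epsilon>"
  have "v = 0" if "?L *v v = 0" for v
  proof -
    have "(norm (transpose F *v v))\<^sup>2 + \<epsilon> * (v \<bullet> v) = 0"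
      by (metis inner_regularized_gram inner_zero_right that)
    then have "\<epsilon> * (v \<bullet> v) = 0"
      using assms by (smt (verit) inner_ge_zero mult_nonneg_nonneg zero_le_power2)
    then show ?thesis
      using assms by simp
  qed
  then obtain A where AL: "A ** ?L = mat 1"
    using matrix_left_invertible_ker by blast
  then have LA: "?L ** A = mat 1"
    using matrix_left_right_inverse by blast
  have "transpose ?L = ?L"
    by (simp add: transpose_add matrix_transpose_mul)
  then have "transpose A ** ?L = mat 1"
    by (metis LA matrix_transpose_mul transpose_mat)
  then have sym: "transpose A = A"
    by (metis LA matrix_mul_assoc matrix_mul_lid matrix_mul_rid)
  have "0 \<le> v \<bullet> (A *v v)" for v
  proof -
    have "v \<bullet> (A *v v) = (A *v v) \<bullet> (?L *v (A *v v))"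
      by (simp add: matrix_vector_mul_assoc LA inner_commute)
    then show ?thesis
      using assms by (simp only: inner_regularized_gram) simp
  qed
  with AL LA sym show thesis
    using that by blast
qed

lemma regularized_solution_bounds:
  fixes E F :: "real^'n^'d"
  assumes dom: "\<And>v. norm (transpose E *v v) \<le> norm (transpose F *v v)" and "\<epsilon> > 0"
    and w: "(F ** transpose F + mat \<epsilon>) *v w = column j E"
  shows "column j E \<bullet> w \<le> 1" and "norm (transpose F *v w) \<le> 1"
proof -
  define c where "c = column j E \<bullet> w"
  have c_eq: "c = (norm (transpose F *v w))\<^sup>2 + \<epsilon> * (w \<bullet> w)"
    using inner_regularized_gram[of w F \<epsilon>] w by (simp add: c_def inner_commute)
  have "(transpose E *v w) $ j = c"
    by (simp add: c_def column_def inner_vec_def vector_matrix_mult_def mult.commute)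
  then have "c\<^sup>2 \<le> (norm (transpose E *v w))\<^sup>2"
    by (metis abs_ge_zero component_le_norm_cart power2_abs power_mono)
  also have "\<dots> \<le> (norm (transpose F *v w))\<^sup>2"
    using dom by (simp add: power_mono)
  also have "\<dots> \<le> c"
    using c_eq \<open>\<epsilon> > 0\<close> by simp
  finally have "c \<le> 1"
    by (cases "c > 0") (auto simp: power2_eq_square)
  then show "column j E \<bullet> w \<le> 1"
    by (simp add: c_def)
  have "(norm (transpose F *v w))\<^sup>2 \<le> 1"
    using c_eq \<open>c \<le> 1\<close> \<open>\<epsilon> > 0\<close> by (smt (verit) inner_ge_zero mult_nonneg_nonneg)
  then show "norm (transpose F *v w) \<le> 1"
    by (simp add: power_le_one_iff)
qed

lemma trace_transpose_mult_le_sum_norm_columns: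
  fixes W M :: "real^'n^'d"
  assumes "\<And>j. norm (column j W) \<le> 1"
  shows "trace (transpose W ** M) \<le> (\<Sum>j\<in>UNIV. norm (column j M))"
  unfolding trace_transpose_mult
proof (rule sum_mono)
  fix j
  have "column j W \<bullet> column j M \<le> norm (column j W) * norm (column j M)"
    by (rule norm_cauchy_schwarz)
  also have "\<dots> \<le> norm (column j M)"
    using assms[of j] by (simp add: mult_left_le_one_le)
  finally show "column j W \<bullet> column j M \<le> norm (column j M)" .
qed

lemma trace_test_matrix_mult_sym_part:
  fixes E F :: "real^'n^'d"
  assumes AL: "A ** (F ** transpose F + mat \<epsilon>) = mat 1" and A_sym: "transpose A = A"
  shows "trace (transpose (transpose F ** A ** E) ** (transpose E ** F + transpose F ** E)) =
    trace ((F ** transpose E) ** (A ** (F ** transpose E))) + trace (E ** transpose E)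
      - \<epsilon> * trace (transpose E ** (A ** E))"
proof -
  have AFF: "A ** F ** transpose F = mat 1 - \<epsilon> *\<^sub>R A"
    using AL by (simp add: matrix_add_ldistrib matrix_mul_mat_right matrix_mul_assoc algebra_simps)
  have "trace (transpose (transpose F ** A ** E) ** (transpose E ** F)) =
      trace ((F ** transpose E) ** (A ** (F ** transpose E)))"
    using trace_mul_sym[of F "transpose E ** A ** F ** transpose E"]
    by (simp add: matrix_transpose_mul A_sym matrix_mul_assoc)
  moreover have "trace (transpose (transpose F ** A ** E) ** (transpose F ** E)) =
      trace (transpose E ** ((A ** F ** transpose F) ** E))"
    by (simp add: matrix_transpose_mul A_sym matrix_mul_assoc)
  moreover have "\<dots> = trace (E ** transpose E) - \<epsilon> * trace (transpose E ** (A ** E))"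
    by (simp add: AFF matrix_diff_rdistrib matrix_diff_ldistrib trace_sub matrix_scalar_ac
        trace_scaleR trace_mul_sym[of "transpose E" E] flip: scalar_matrix_assoc)
  ultimately show ?thesis
    by (simp add: matrix_add_ldistrib trace_add)
qed

lemma frobenius_le_sum_norm_columns_sym_part_add:
  fixes E F :: "real^'n^'d"
  assumes sym: "transpose (F ** transpose E) = F ** transpose E"
    and dom: "\<And>v. norm (transpose E *v v) \<le> norm (transpose F *v v)" and "\<epsilon> > 0"
  shows "trace (E ** transpose E) \<le>
    (\<Sum>j\<in>UNIV. norm (column j (transpose E ** F + transpose F ** E))) + \<epsilon> * real CARD('n)"
proof -
  obtain A where AL: "A ** (F ** transpose F + mat \<epsilon>) = mat 1"
    and LA: "(F ** transpose F + mat \<epsilon>) ** A = mat 1"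
    and A_sym: "transpose A = A" and A_psd: "\<And>v. 0 \<le> v \<bullet> (A *v v)"
    using regularized_gram_inverse[OF \<open>\<epsilon> > 0\<close>] by blast
  have solution: "(F ** transpose F + mat \<epsilon>) *v (A *v column j E) = column j E" for j
    by (simp add: matrix_vector_mul_assoc LA)
  let ?M = "transpose E ** F + transpose F ** E" and ?S = "F ** transpose E"
  \<comment> \<open>Test \<open>?M\<close> against \<open>F\<^sup>T A E\<close>, a regularised \<open>F\<^sup>T (F F\<^sup>T)\<^sup>+ E\<close> whose columns have norm at most 1.\<close>
  have "trace (transpose (transpose F ** A ** E) ** ?M) \<le> (\<Sum>j\<in>UNIV. norm (column j ?M))"
    using regularized_solution_bounds(2)[OF dom \<open>\<epsilon> > 0\<close> solution]
    by (intro trace_transpose_mult_le_sum_norm_columns) (simp add: column_matrix_mult flip: matrix_mul_assoc)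
  moreover have "0 \<le> trace (?S ** (A ** ?S))"
  proof -
    have "0 \<le> trace (transpose ?S ** (A ** ?S))"
      unfolding trace_transpose_mult column_matrix_mult by (intro sum_nonneg A_psd)
    then show ?thesis
      by (simp only: sym)
  qed
  moreover have "\<epsilon> * trace (transpose E ** (A ** E)) \<le> \<epsilon> * real CARD('n)"
  proof -
    have "trace (transpose E ** (A ** E)) = (\<Sum>j\<in>UNIV. column j E \<bullet> (A *v column j E))"
      by (simp add: trace_transpose_mult column_matrix_mult)
    also have "\<dots> \<le> (\<Sum>j\<in>(UNIV::'n set). 1)"
      using regularized_solution_bounds(1)[OF dom \<open>\<epsilon> > 0\<close> solution] by (intro sum_mono) simp
    finally show ?thesis
      using \<open>\<epsilon> > 0\<close> by (intro mult_left_mono) auto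
  qed
  ultimately show ?thesis
    using trace_test_matrix_mult_sym_part[OF AL A_sym, where E = E] by linarith
qed

lemma frobenius_le_sum_norm_columns_sym_part:
  fixes E F :: "real^'n^'d"
  assumes "transpose (F ** transpose E) = F ** transpose E"
    and "\<And>v. norm (transpose E *v v) \<le> norm (transpose F *v v)"
  shows "trace (E ** transpose E) \<le> (\<Sum>j\<in>UNIV. norm (column j (transpose E ** F + transpose F ** E)))"
proof (rule field_le_epsilon)
  fix e :: real
  assume "e > 0"
  then show "trace (E ** transpose E) \<le> (\<Sum>j\<in>UNIV. norm (column j (transpose E ** F + transpose F ** E))) + e"
    using frobenius_le_sum_norm_columns_sym_part_add[OF assms, of "e / real CARD('n)"] by simp
qed

lemma sum_sq_norm_columns_eq_trace:
  "(\<Sum>j\<in>UNIV. (norm (column j (A::real^'n^'d)))\<^sup>2) = trace (A ** transpose A)"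
  by (simp add: trace_mul_sym[of A] trace_transpose_mult power2_norm_eq_inner)

lemma frobenius_dist_le_gram_diff:
  fixes X Y :: "real^'n^'d"
  assumes sym: "transpose (X ** transpose Y) = X ** transpose Y"
    and psd: "\<And>v. 0 \<le> v \<bullet> ((X ** transpose Y) *v v)"
  shows "(\<Sum>j\<in>UNIV. (norm (column j X - column j Y))\<^sup>2) \<le>
    2 * (\<Sum>j\<in>UNIV. norm (column j (transpose X ** X - transpose Y ** Y)))"
proof -
  have "transpose ((X + Y) ** transpose (X - Y)) = (X + Y) ** transpose (X - Y)"
    unfolding mult_transpose_add_diff[OF sym] by (simp add: transpose_diff matrix_transpose_mul)
  then have "trace ((X - Y) ** transpose (X - Y)) \<le>
      (\<Sum>j\<in>UNIV. norm (column j (transpose (X - Y) ** (X + Y) + transpose (X + Y) ** (X - Y))))"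
    using frobenius_le_sum_norm_columns_sym_part norm_transpose_diff_le_norm_transpose_add[OF psd]
    by blast
  also have "\<dots> = 2 * (\<Sum>j\<in>UNIV. norm (column j (transpose X ** X - transpose Y ** Y)))"
    by (simp add: sum_distrib_left column_scaleR flip: scaleR_two_gram_diff)
  finally show ?thesis
    by (simp add: column_diff flip: sum_sq_norm_columns_eq_trace)
qed


section \<open>Centroids and double centring\<close>

definition centroid :: "('n::finite \<Rightarrow> 'a::real_vector) \<Rightarrow> 'a" where
  "centroid x = (1 / real CARD('n)) *\<^sub>R (\<Sum>k\<in>UNIV. x k)"

lemma sum_minus_centroid: "(\<Sum>k\<in>UNIV. x k - centroid x) = 0"
  by (simp add: centroid_def sum_subtractf sum_constant_scaleR)

lemma centroid_const: "centroid (\<lambda>k::'n::finite. c) = c"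
  by (simp add: centroid_def sum_constant_scaleR)

lemma centroid_add: "centroid (\<lambda>k. x k + y k) = centroid x + centroid y"
  by (simp add: centroid_def sum.distrib scaleR_add_right)

lemma centroid_diff: "centroid (\<lambda>k. x k - y k) = centroid x - centroid y"
  by (simp add: centroid_def sum_subtractf scaleR_diff_right)

lemma norm_centroid_le: "norm (centroid x) \<le> centroid (\<lambda>k. norm (x k))"
  unfolding centroid_def using norm_sum[of x UNIV] by (simp add: divide_right_mono)

text \<open>The matrix \<open>-1/2 J \<delta> J\<close> of classical multidimensional scaling, \<open>J\<close> the centring projection.\<close>

definition double_centering :: "('n::finite \<Rightarrow> 'n \<Rightarrow> real) \<Rightarrow> 'n \<Rightarrow> 'n \<Rightarrow> real" where
  "double_centering \<delta> i j =
    -(1/2) * (\<delta> i j - centroid (\<delta> i) - centroid (\<lambda>k. \<delta> k j) + centroid (\<lambda>k. centroid (\<delta> k)))"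

lemma double_centering_diff:
  "double_centering (\<lambda>i j. \<delta> i j - \<delta>' i j) i j = double_centering \<delta> i j - double_centering \<delta>' i j"
  by (simp add: double_centering_def centroid_diff algebra_simps)

lemma inner_minus_centroid_eq_double_centering:
  fixes x :: "'n::finite \<Rightarrow> 'a::real_inner"
  shows "(x i - centroid x) \<bullet> (x j - centroid x) = double_centering (\<lambda>i j. (norm (x i - x j))\<^sup>2) i j"
proof -
  define y where "y k = x k - centroid x" for k
  define m where "m = centroid (\<lambda>k. y k \<bullet> y k)"
  have sq_dist: "(norm (x a - x b))\<^sup>2 = y a \<bullet> y a + y b \<bullet> y b - 2 * (y a \<bullet> y b)" for a b
  proof -
    have "x a - x b = y a - y b"
      by (simp add: y_def)
    then show ?thesis
      by (simp add: power2_norm_eq_inner inner_diff_left inner_diff_right inner_commute)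
  qed
  have sum_y: "(\<Sum>k\<in>UNIV. y k) = 0"
    unfolding y_def by (rule sum_minus_centroid)
  have row: "centroid (\<lambda>k. (norm (x a - x k))\<^sup>2) = y a \<bullet> y a + m" for a
  proof -
    have "(\<Sum>k\<in>UNIV. (norm (x a - x k))\<^sup>2) =
        real CARD('n) * (y a \<bullet> y a) + (\<Sum>k\<in>UNIV. y k \<bullet> y k) - 2 * (y a \<bullet> (\<Sum>k\<in>UNIV. y k))"
      by (simp add: sq_dist sum.distrib sum_subtractf inner_sum_right sum_distrib_left)
    then show ?thesis
      by (simp add: centroid_def m_def sum_y field_simps)
  qed
  have col: "centroid (\<lambda>k. (norm (x k - x b))\<^sup>2) = y b \<bullet> y b + m" for b
    using row[of b] by (simp add: norm_minus_commute)
  have total: "centroid (\<lambda>k. y k \<bullet> y k + m) = 2 * m"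
    by (simp add: centroid_add centroid_const m_def)
  show ?thesis
    by (simp only: double_centering_def row col total) (simp add: sq_dist y_def[symmetric])
qed

lemma norm_minus_centroid_le:
  fixes c :: "'n::finite \<Rightarrow> real"
  shows "norm (\<chi> i. c i - centroid c) \<le> norm (\<chi> i. c i)"
proof (rule power2_le_imp_le)
  have "orthogonal (\<chi> i. c i - centroid c) (\<chi> i. centroid c)"
    using sum_minus_centroid[of c]
    by (simp add: orthogonal_def inner_vec_def flip: sum_distrib_right)
  moreover have "(\<chi> i. c i) = (\<chi> i. c i - centroid c) + (\<chi> i. centroid c)"
    by (simp add: vec_eq_iff)
  ultimately have "(norm (\<chi> i. c i))\<^sup>2 = (norm (\<chi> i. c i - centroid c))\<^sup>2 + (norm (\<chi> i::'n. centroid c))\<^sup>2"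
    by (metis norm_add_Pythagorean)
  then show "(norm (\<chi> i. c i - centroid c))\<^sup>2 \<le> (norm (\<chi> i. c i))\<^sup>2"
    by simp
qed simp

lemma norm_double_centering_column_le:
  "norm (\<chi> i. double_centering \<delta> i j) \<le>
    (1/2) * ((\<Sum>i\<in>UNIV. \<bar>\<delta> i j\<bar>) + (\<Sum>i\<in>UNIV. \<bar>centroid (\<delta> i)\<bar>))"
proof -
  define c where "c = (\<lambda>i. \<delta> i j - centroid (\<delta> i))"
  have "(\<chi> i. double_centering \<delta> i j) = (-(1/2)) *\<^sub>R (\<chi> i. c i - centroid c)"
    by (simp add: vec_eq_iff double_centering_def c_def centroid_diff algebra_simps)
  then have "norm (\<chi> i. double_centering \<delta> i j) \<le> (1/2) * norm (\<chi> i. c i)"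
    using norm_minus_centroid_le[of c] by simp
  also have "norm (\<chi> i. c i) \<le> (\<Sum>i\<in>UNIV. \<bar>c i\<bar>)"
    using norm_le_l1_cart[of "\<chi> i. c i"] by simp
  also have "\<dots> \<le> (\<Sum>i\<in>UNIV. \<bar>\<delta> i j\<bar> + \<bar>centroid (\<delta> i)\<bar>)"
    by (intro sum_mono) (simp add: c_def abs_triangle_ineq4)
  finally show ?thesis
    by (simp add: sum.distrib)
qed

lemma sum_norm_double_centering_le:
  fixes \<delta> :: "'n::finite \<Rightarrow> 'n \<Rightarrow> real"
  shows   "(\<Sum>j\<in>UNIV. norm (\<chi> i. double_centering \<delta> i j)) \<le> (\<Sum>i\<in>UNIV. \<Sum>j\<in>UNIV. \<bar>\<delta> i j\<bar>)"
proof -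
  let ?S = "\<Sum>i\<in>UNIV. \<Sum>j\<in>UNIV. \<bar>\<delta> i j\<bar>"
  have "(\<Sum>i\<in>UNIV. \<bar>centroid (\<delta> i)\<bar>) \<le> (\<Sum>i\<in>UNIV. centroid (\<lambda>k. \<bar>\<delta> i k\<bar>))"
  proof (rule sum_mono)
    fix i
    show "\<bar>centroid (\<delta> i)\<bar> \<le> centroid (\<lambda>k. \<bar>\<delta> i k\<bar>)"
      using norm_centroid_le[of "\<delta> i"] by simp
  qed
  also have "\<dots> = ?S / real CARD('n)"
    by (simp add: centroid_def sum_divide_distrib)
  finally have rows: "real CARD('n) * (\<Sum>i\<in>UNIV. \<bar>centroid (\<delta> i)\<bar>) \<le> ?S"
    by (simp add: field_simps)
  have "(\<Sum>j\<in>UNIV. norm (\<chi> i. double_centering \<delta> i j)) \<le>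
      (\<Sum>j\<in>UNIV. (1/2) * ((\<Sum>i\<in>UNIV. \<bar>\<delta> i j\<bar>) + (\<Sum>i\<in>UNIV. \<bar>centroid (\<delta> i)\<bar>)))"
    by (intro sum_mono norm_double_centering_column_le)
  moreover have "(\<Sum>j\<in>UNIV. (1/2) * ((\<Sum>i\<in>UNIV. \<bar>\<delta> i j\<bar>) + (\<Sum>i\<in>UNIV. \<bar>centroid (\<delta> i)\<bar>))) =
      (1/2) * ((\<Sum>j\<in>UNIV. \<Sum>i\<in>UNIV. \<bar>\<delta> i j\<bar>) + real CARD('n) * (\<Sum>i\<in>UNIV. \<bar>centroid (\<delta> i)\<bar>))"
    unfolding sum_distrib_left[symmetric] by (simp add: sum.distrib)
  moreover have "(\<Sum>j\<in>UNIV. \<Sum>i\<in>UNIV. \<bar>\<delta> i j\<bar>) = ?S"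
    by (rule sum.swap)
  ultimately show ?thesis
    using rows by argo
qed

lemma sum_norm_centered_gram_diff_le:
  fixes x z :: "'n::finite \<Rightarrow> 'a::real_inner"
  shows "(\<Sum>j\<in>UNIV. norm (\<chi> i. (x i - centroid x) \<bullet> (x j - centroid x) - (z i - centroid z) \<bullet> (z j - centroid z)))
    \<le> (\<Sum>i\<in>UNIV. \<Sum>j\<in>UNIV. \<bar>(norm (x i - x j))\<^sup>2 - (norm (z i - z j))\<^sup>2\<bar>)"
proof -
  have "(\<chi> i. (x i - centroid x) \<bullet> (x j - centroid x) - (z i - centroid z) \<bullet> (z j - centroid z)) =
      (\<chi> i. double_centering (\<lambda>i j. (norm (x i - x j))\<^sup>2 - (norm (z i - z j))\<^sup>2) i j)" for j
    by (simp add: double_centering_diff inner_minus_centroid_eq_double_centering)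
  then show ?thesis
    using sum_norm_double_centering_le[of "\<lambda>i j. (norm (x i - x j))\<^sup>2 - (norm (z i - z j))\<^sup>2"] by simp
qed


section \<open>Procrustes alignment\<close>

definition matrix_of_columns :: "('n \<Rightarrow> real^'d) \<Rightarrow> real^'n^'d" where
  "matrix_of_columns x = (\<chi> k i. x i $ k)"

lemma column_matrix_of_columns [simp]: "column j (matrix_of_columns x) = x j"
  by (simp add: matrix_of_columns_def column_def vec_eq_iff)

lemma exists_orthogonal_cross_gram_psd:
  fixes X Z :: "real^'n^'d"
  obtains R where "orthogonal_matrix R"
    and "transpose (X ** transpose (R ** Z)) = X ** transpose (R ** Z)"
    and "\<And>v. 0 \<le> v \<bullet> ((X ** transpose (R ** Z)) *v v)"
proof -
  obtain R where R: "orthogonal_matrix R"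
    and max: "\<And>G. orthogonal_matrix G \<Longrightarrow> trace (G ** (R ** (Z ** transpose X))) \<le> trace (R ** (Z ** transpose X))"
    using exists_orthogonal_maximizing_trace by blast
  have K: "R ** (Z ** transpose X) = transpose (X ** transpose (R ** Z))"
    by (simp add: matrix_transpose_mul matrix_mul_assoc)
  have sym: "transpose (X ** transpose (R ** Z)) = X ** transpose (R ** Z)"
    using trace_maximal_imp_symmetric[OF max] by (simp add: K)
  have "0 \<le> v \<bullet> ((X ** transpose (R ** Z)) *v v)" for v
    using trace_maximal_imp_psd[OF max] by (metis K sym)
  with R sym that show thesis
    by blast
qed

lemma exists_alignment_le_sq_dist_diff:
  fixes x z :: "'n::finite \<Rightarrow> real^'d"
  obtains R t where "orthogonal_matrix R"
    and "(\<Sum>j\<in>UNIV. (norm (x j - R *v z j + t))\<^sup>2) \<le>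
      2 * (\<Sum>i\<in>UNIV. \<Sum>j\<in>UNIV. \<bar>(norm (x i - x j))\<^sup>2 - (norm (z i - z j))\<^sup>2\<bar>)"
proof -
  define X where "X = matrix_of_columns (\<lambda>i. x i - centroid x)"
  define Z where "Z = matrix_of_columns (\<lambda>i. z i - centroid z)"
  obtain R where R: "orthogonal_matrix R"
    and sym: "transpose (X ** transpose (R ** Z)) = X ** transpose (R ** Z)"
    and psd: "\<And>v. 0 \<le> v \<bullet> ((X ** transpose (R ** Z)) *v v)"
    using exists_orthogonal_cross_gram_psd[of X Z] by blast
  define t where "t = R *v centroid z - centroid x"
  have "column j X - column j (R ** Z) = x j - R *v z j + t" for j
    by (simp add: X_def Z_def t_def column_matrix_mult matrix_vector_mult_diff_distrib)
  moreover have "column j (transpose X ** X - transpose (R ** Z) ** (R ** Z)) =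
      (\<chi> i. (x i - centroid x) \<bullet> (x j - centroid x) - (z i - centroid z) \<bullet> (z j - centroid z))" for j
    by (simp only: matrix_mult_transpose_dot_column X_def Z_def column_matrix_mult
        column_matrix_of_columns orthogonal_matrix_inner[OF R]) (simp add: column_def)
  ultimately have "(\<Sum>j\<in>UNIV. (norm (x j - R *v z j + t))\<^sup>2) \<le>
      2 * (\<Sum>j\<in>UNIV. norm (\<chi> i. (x i - centroid x) \<bullet> (x j - centroid x) - (z i - centroid z) \<bullet> (z j - centroid z)))"
    using frobenius_dist_le_gram_diff[OF sym psd] by simp
  also have "\<dots> \<le> 2 * (\<Sum>i\<in>UNIV. \<Sum>j\<in>UNIV. \<bar>(norm (x i - x j))\<^sup>2 - (norm (z i - z j))\<^sup>2\<bar>)"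
    using sum_norm_centered_gram_diff_le by simp
  finally show thesis
    using R that by blast
qed


section \<open>The two distances\<close>

lemma sum_le_sqrt_card_mult_sqrt_sum_squares:
  fixes e :: "'n::finite \<Rightarrow> real"
  shows "(\<Sum>i\<in>UNIV. e i) \<le> sqrt (real CARD('n)) * sqrt (\<Sum>i\<in>UNIV. (e i)\<^sup>2)"
proof -
  have "(\<Sum>i\<in>UNIV. 1 * e i)\<^sup>2 \<le> (\<Sum>i\<in>(UNIV::'n set). 1\<^sup>2) * (\<Sum>i\<in>UNIV. (e i)\<^sup>2)"
    by (rule Cauchy_Schwarz_ineq_sum)
  then show ?thesis
    by (simp add: real_le_rsqrt flip: real_sqrt_mult)
qed

lemma abs_square_diff_le:
  fixes a b r :: real
  assumes "0 \<le> a" "a \<le> r" "0 \<le> b" "b \<le> r"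
  shows "\<bar>a\<^sup>2 - b\<^sup>2\<bar> \<le> 2 * r * \<bar>a - b\<bar>"
proof -
  have "a\<^sup>2 - b\<^sup>2 = (a - b) * (a + b)"
    by (simp add: power2_eq_square algebra_simps)
  then have "\<bar>a\<^sup>2 - b\<^sup>2\<bar> = \<bar>a - b\<bar> * (a + b)"
    using assms by (simp add: abs_mult)
  also have "\<dots> \<le> \<bar>a - b\<bar> * (2 * r)"
    using assms by (intro mult_left_mono) auto
  finally show ?thesis
    by (simp add: mult_ac)
qed

lemma powr_three_halves: "0 \<le> x \<Longrightarrow> x powr (3/2) = x * sqrt (x::real)"
  using powr_add[of x 1 "1/2"] by (simp add: powr_half_sqrt)

lemma norm_le_norm_1_2: "norm (X i) \<le> norm_1_2 X"
  unfolding norm_1_2_def by (rule Max_ge) auto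

lemma hard_gw_dist_le:
  fixes X Y :: "'n::finite \<Rightarrow> real^'d"
  assumes "\<pi> permutes UNIV"
  shows "hard_gw_dist X Y \<le> (\<Sum>i\<in>UNIV. \<Sum>j\<in>UNIV. \<bar>norm (X i - X j) - norm (Y (\<pi> i) - Y (\<pi> j))\<bar>)"
  unfolding hard_gw_dist_def using assms
  by (intro Min_le finite_image_set) (auto simp: finite_permutations)

lemma hard_gw_dist_attained:
  fixes X Y :: "'n::finite \<Rightarrow> real^'d"
  obtains \<pi> where "\<pi> permutes UNIV"
    and "hard_gw_dist X Y = (\<Sum>i\<in>UNIV. \<Sum>j\<in>UNIV. \<bar>norm (X i - X j) - norm (Y (\<pi> i) - Y (\<pi> j))\<bar>)"
proof -
  let ?D = "{(\<Sum>i\<in>UNIV. \<Sum>j\<in>UNIV. \<bar>norm (X i - X j) - norm (Y (\<pi> i) - Y (\<pi> j))\<bar>) | \<pi>.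
    \<pi> permutes (UNIV::'n set)}"
  have "finite ?D"
    by (auto simp: finite_permutations intro: finite_image_set)
  moreover have "?D \<noteq> {}"
    using permutes_id[of "UNIV::'n set"] by blast
  ultimately have "Min ?D \<in> ?D"
    by (rule Min_in)
  then show thesis
    using that by (auto simp: hard_gw_dist_def)
qed

lemma hard_gw_dist_nonneg: "0 \<le> hard_gw_dist (X::'n::finite \<Rightarrow> real^'d) Y"
proof -
  obtain \<pi> where "hard_gw_dist X Y = (\<Sum>i\<in>UNIV. \<Sum>j\<in>UNIV. \<bar>norm (X i - X j) - norm (Y (\<pi> i) - Y (\<pi> j))\<bar>)"
    using hard_gw_dist_attained by blast
  then show ?thesis
    by (simp add: sum_nonneg)
qed

lemma hard_gw_dist_eq_0_if_card_eq_1: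
  fixes X Y :: "'n::finite \<Rightarrow> real^'d"
  assumes "CARD('n) = 1"
  shows "hard_gw_dist X Y = 0"
proof -
  obtain \<pi> where hard_gw: "hard_gw_dist X Y = (\<Sum>i\<in>UNIV. \<Sum>j\<in>UNIV. \<bar>norm (X i - X j) - norm (Y (\<pi> i) - Y (\<pi> j))\<bar>)"
    using hard_gw_dist_attained by blast
  obtain a :: 'n where univ: "UNIV = {a}"
    using assms card_1_singletonE by blast
  show ?thesis
    unfolding hard_gw univ by simp
qed

lemma procrustes_dist_le:
  fixes X Y :: "'n::finite \<Rightarrow> real^'d"
  assumes "\<pi> permutes UNIV" "orthogonal_matrix R"
  shows "procrustes_dist X Y \<le> sqrt (\<Sum>j\<in>UNIV. (norm (X j - R *v Y (\<pi> j) + t))\<^sup>2)"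
  unfolding procrustes_dist_def using assms
  by (intro real_sqrt_le_mono cInf_lower) (auto intro!: bdd_belowI[where m = 0] sum_nonneg)

lemma le_procrustes_dist:
  fixes X Y :: "'n::finite \<Rightarrow> real^'d"
  assumes "0 \<le> c"
    and "\<And>\<pi> R t. \<pi> permutes UNIV \<Longrightarrow> orthogonal_matrix R \<Longrightarrow>
      c \<le> sqrt (\<Sum>j\<in>UNIV. (norm (X j - R *v Y (\<pi> j) + t))\<^sup>2)"
  shows "c \<le> procrustes_dist X Y"
proof -
  let ?P = "{(\<Sum>j\<in>UNIV. (norm (X j - R *v Y (\<pi> j) + t))\<^sup>2) | \<pi> R t.
    \<pi> permutes (UNIV::'n set) \<and> orthogonal_matrix (R :: real^'d^'d)}"
  have "c\<^sup>2 \<le> Inf ?P"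
  proof (rule cInf_greatest)
    show "?P \<noteq> {}"
      using permutes_id orthogonal_matrix_id by blast
    fix s
    assume "s \<in> ?P"
    then obtain \<pi> R t where "\<pi> permutes UNIV" "orthogonal_matrix R"
      and s: "s = (\<Sum>j\<in>UNIV. (norm (X j - R *v Y (\<pi> j) + t))\<^sup>2)"
      by blast
    then have "c \<le> sqrt s"
      using assms(2) by blast
    moreover have "0 \<le> s"
      by (simp add: s sum_nonneg)
    ultimately show "c\<^sup>2 \<le> s"
      using assms(1) by (metis power_mono real_sqrt_pow2)
  qed
  then show ?thesis
    unfolding procrustes_dist_def by (rule real_le_rsqrt)
qed

lemma procrustes_dist_nonneg: "0 \<le> procrustes_dist (X::'n::finite \<Rightarrow> real^'d) Y"
  by (rule le_procrustes_dist) (auto simp: sum_nonneg)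

lemma hard_gw_dist_le_alignment:
  fixes X Y :: "'n::finite \<Rightarrow> real^'d"
  assumes \<pi>: "\<pi> permutes UNIV" and R: "orthogonal_matrix R"
  shows "hard_gw_dist X Y \<le>
    2 * real CARD('n) powr (3/2) * sqrt (\<Sum>j\<in>UNIV. (norm (X j - R *v Y (\<pi> j) + t))\<^sup>2)"
proof -
  define e where "e i = norm (X i - R *v Y (\<pi> i) + t)" for i
  have "\<bar>norm (X i - X j) - norm (Y (\<pi> i) - Y (\<pi> j))\<bar> \<le> e i + e j" for i j
  proof -
    have "norm (Y (\<pi> i) - Y (\<pi> j)) = norm (R *v Y (\<pi> i) - R *v Y (\<pi> j))"
      by (simp add: orthogonal_matrix_norm[OF R] flip: matrix_vector_mult_diff_distrib)
    then have "\<bar>norm (X i - X j) - norm (Y (\<pi> i) - Y (\<pi> j))\<bar> \<le>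
        norm ((X i - R *v Y (\<pi> i) + t) - (X j - R *v Y (\<pi> j) + t))"
      using norm_triangle_ineq3[of "X i - X j" "R *v Y (\<pi> i) - R *v Y (\<pi> j)"]
      by (simp add: algebra_simps)
    also have "\<dots> \<le> e i + e j"
      unfolding e_def by (rule norm_triangle_ineq4)
    finally show ?thesis .
  qed
  then have "hard_gw_dist X Y \<le> (\<Sum>i\<in>UNIV. \<Sum>j\<in>UNIV. e i + e j)"
    using hard_gw_dist_le[OF \<pi>, of X] by (smt (verit) sum_mono)
  also have "\<dots> = 2 * real CARD('n) * (\<Sum>i\<in>UNIV. e i)"
    by (simp add: sum.distrib sum_distrib_left mult.assoc)
  also have "\<dots> \<le> 2 * real CARD('n) * (sqrt (real CARD('n)) * sqrt (\<Sum>i\<in>UNIV. (e i)\<^sup>2))"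
    by (intro mult_left_mono sum_le_sqrt_card_mult_sqrt_sum_squares) simp
  finally show ?thesis
    by (simp add: e_def powr_three_halves mult_ac)
qed

lemma hard_gw_dist_le_procrustes_dist:
  fixes X Y :: "'n::finite \<Rightarrow> real^'d"
  shows "hard_gw_dist X Y \<le> 2 * real CARD('n) powr (3/2) * procrustes_dist X Y"
proof -
  define K where "K = 2 * real CARD('n) powr (3/2)"
  have "K > 0"
    by (simp add: K_def)
  have "hard_gw_dist X Y / K \<le> procrustes_dist X Y"
  proof (rule le_procrustes_dist)
    show "0 \<le> hard_gw_dist X Y / K"
      using \<open>K > 0\<close> by (intro divide_nonneg_pos hard_gw_dist_nonneg)
    fix \<pi> :: "'n \<Rightarrow> 'n" and R :: "real^'d^'d" and t
    assume "\<pi> permutes UNIV" "orthogonal_matrix R"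
    then show "hard_gw_dist X Y / K \<le> sqrt (\<Sum>j\<in>UNIV. (norm (X j - R *v Y (\<pi> j) + t))\<^sup>2)"
      using \<open>K > 0\<close> hard_gw_dist_le_alignment by (simp add: K_def pos_divide_le_eq mult_ac)
  qed
  then show ?thesis
    using \<open>K > 0\<close> by (simp add: K_def pos_divide_le_eq mult_ac)
qed

lemma procrustes_dist_sq_le_hard_gw_dist:
  fixes X Y :: "'n::finite \<Rightarrow> real^'d"
  assumes "norm_1_2 X \<le> 1" "norm_1_2 Y \<le> 1"
  shows "(procrustes_dist X Y)\<^sup>2 \<le> 8 * hard_gw_dist X Y"
proof -
  obtain \<pi> where \<pi>: "\<pi> permutes UNIV"
    and hard_gw: "hard_gw_dist X Y = (\<Sum>i\<in>UNIV. \<Sum>j\<in>UNIV. \<bar>norm (X i - X j) - norm (Y (\<pi> i) - Y (\<pi> j))\<bar>)"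
    by (rule hard_gw_dist_attained)
  obtain R t where R: "orthogonal_matrix R"
    and align: "(\<Sum>j\<in>UNIV. (norm (X j - R *v Y (\<pi> j) + t))\<^sup>2) \<le>
      2 * (\<Sum>i\<in>UNIV. \<Sum>j\<in>UNIV. \<bar>(norm (X i - X j))\<^sup>2 - (norm (Y (\<pi> i) - Y (\<pi> j)))\<^sup>2\<bar>)"
    using exists_alignment_le_sq_dist_diff[of X "\<lambda>i. Y (\<pi> i)"] by blast
  have diam: "norm (Z i - Z j) \<le> 2" if "norm_1_2 Z \<le> 1" for Z :: "'n \<Rightarrow> real^'d" and i j
    using norm_triangle_ineq4[of "Z i" "Z j"] norm_le_norm_1_2[of Z i] norm_le_norm_1_2[of Z j] that
    by linarith
  have "\<bar>(norm (X i - X j))\<^sup>2 - (norm (Y (\<pi> i) - Y (\<pi> j)))\<^sup>2\<bar> \<le>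
      4 * \<bar>norm (X i - X j) - norm (Y (\<pi> i) - Y (\<pi> j))\<bar>" for i j
    using abs_square_diff_le[OF _ diam _ diam] assms by simp
  then have "(\<Sum>i\<in>UNIV. \<Sum>j\<in>UNIV. \<bar>(norm (X i - X j))\<^sup>2 - (norm (Y (\<pi> i) - Y (\<pi> j)))\<^sup>2\<bar>) \<le>
      4 * hard_gw_dist X Y"
    unfolding hard_gw by (simp add: sum_distrib_left sum_mono)
  moreover have "(procrustes_dist X Y)\<^sup>2 \<le> (\<Sum>j\<in>UNIV. (norm (X j - R *v Y (\<pi> j) + t))\<^sup>2)"
  proof -
    have "(procrustes_dist X Y)\<^sup>2 \<le> (sqrt (\<Sum>j\<in>UNIV. (norm (X j - R *v Y (\<pi> j) + t))\<^sup>2))\<^sup>2"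
      using procrustes_dist_le[OF \<pi> R] procrustes_dist_nonneg by (rule power_mono)
    then show ?thesis
      by (simp add: sum_nonneg)
  qed
  ultimately show ?thesis
    using align by linarith
qed

theorem theorem1:
  fixes X Y :: "'n::finite \<Rightarrow> real^'d"
  shows "hard_gw_dist X Y \<le> 2 * real CARD('n) powr (3/2) * procrustes_dist X Y \<and>
         (norm_1_2 X \<le> 1 \<longrightarrow> norm_1_2 Y \<le> 1 \<longrightarrow>
          (1 / (4 * real CARD('n) + 2)) * (procrustes_dist X Y)\<^sup>2 \<le> hard_gw_dist X Y)"
proof (intro conjI impI)
  show "hard_gw_dist X Y \<le> 2 * real CARD('n) powr (3/2) * procrustes_dist X Y"
    by (rule hard_gw_dist_le_procrustes_dist)
  assume "norm_1_2 X \<le> 1" "norm_1_2 Y \<le> 1"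
  then have eight: "(procrustes_dist X Y)\<^sup>2 \<le> 8 * hard_gw_dist X Y"
    by (rule procrustes_dist_sq_le_hard_gw_dist)
  have "(procrustes_dist X Y)\<^sup>2 \<le> (4 * real CARD('n) + 2) * hard_gw_dist X Y"
  proof (cases "CARD('n) = 1")
    case True
    then show ?thesis
      using eight hard_gw_dist_eq_0_if_card_eq_1[OF True, of X Y] by simp
  next
    case False
    then have "8 \<le> 4 * real CARD('n) + 2"
      using zero_less_card_finite[where 'a = 'n] by linarith
    then have "8 * hard_gw_dist X Y \<le> (4 * real CARD('n) + 2) * hard_gw_dist X Y"
      using hard_gw_dist_nonneg by (rule mult_right_mono)
    then show ?thesis
      using eight by linarith
  qed
  then show "1 / (4 * real CARD('n) + 2) * (procrustes_dist X Y)\<^sup>2 \<le> hard_gw_dist X Y"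
    by (simp add: field_simps)
qed

end
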